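(* Let $\sigma$ be the morphism on $\{a,b,c\}$ given by $\sigma(a)=acaba$, $\sigma(b)=bac$, $\sigma(c)=cab$. Then the infinite fixed point of $\sigma$ beginning with $a$ is $4$-automatic, and hence $2$-automatic.
   Context: For an integer $q\ge 2$, a sequence is $q$-automatic if it is the image under a letter-to-letter map of a fixed point of a morphism all of whose letter-images have length $q$. *)

theory Defs
  imports Main
begin

text \<open>The word u is a fixed point of the morphism s iff s(u) = u, i.e. for every n the
  image of the length-n prefix of u is a prefix of u.\<close>
definition morph_fixed_point :: "('a \<Rightarrow> 'a list) \<Rightarrow> (nat \<Rightarrow> 'a) \<Rightarrow> bool" where
  "morph_fixed_point s u \<longleftrightarrow>
     (\<forall>n. \<forall>i < length (concat (map (s \<circ> u) [0..<n])).
            concat (map (s \<circ> u) [0..<n]) ! i = u i)"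

text \<open>q-automatic: image under a letter-to-letter map of a fixed point of a
  q-uniform morphism on a finite alphabet (alphabet encoded as a finite set of naturals).\<close>
definition q_automatic :: "nat \<Rightarrow> (nat \<Rightarrow> 'b) \<Rightarrow> bool" where
  "q_automatic q x \<longleftrightarrow> 2 \<le> q \<and>
     (\<exists>(A :: nat set) (t :: nat \<Rightarrow> nat list) (w :: nat \<Rightarrow> nat) (f :: nat \<Rightarrow> 'b).
        finite A \<and> (\<forall>c\<in>A. length (t c) = q \<and> set (t c) \<subseteq> A) \<and>
        (\<forall>n. w n \<in> A) \<and> morph_fixed_point t w \<and> (\<forall>n. x n = f (w n)))"

datatype letter = La | Lb | Lc

fun sigma :: "letter \<Rightarrow> letter list" where
  "sigma La = [La, Lc, La, Lb, La]"
| "sigma Lb = [Lb, La, Lc]"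
| "sigma Lc = [Lc, La, Lb]"

end

theory Submission
  imports Defs
begin

(*
  The fixed point of sigma is u = a x0 a x1 a x2 ..., where x is the fixed point of the
  4-uniform morphism c -> cbcb, b -> cbbc: indeed sigma(a)sigma(c) = (ac)(ab)(ac)(ab) and
  sigma(a)sigma(b) = (ac)(ab)(ab)(ac).  Recording at position n the letter x at n div 2
  together with the parity of n turns u into the letter-to-letter image of the fixed point
  of a 4-uniform morphism.  A (q*q)-automatic sequence is q-automatic: the triple
  (state at n div q, n mod q, state at n) is determined by the triple at n div q and n mod q.
*)

lemma upt_add_2: "[i..<i + 2] = [i, Suc i]"
  by (simp add: numeral_2_eq_2)

lemma concat_map_concat:
  "concat (map f (concat xss)) = concat (map (\<lambda>xs. concat (map f xs)) xss)"
  by (induction xss) simp_all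

lemma concat_map_upt_blocks:
  assumes "\<And>k. k < n \<Longrightarrow> g k = map h [q*k..<q*k+q]"
  shows "concat (map g [0..<n]) = map h [0..<q*n]"
  using assms
proof (induction n)
  case 0
  then show ?case by simp
next
  case (Suc n)
  have "[0..<q * Suc n] = [0..<q*n] @ [q*n..<q*n+q]"
    using upt_add_eq_append[of 0 "q*n" q] by (simp add: algebra_simps)
  then show ?case using Suc by simp
qed

lemma uniform_fixed_point_blocks:
  assumes len: "\<And>n. length (t (w n)) = q"
    and rec: "\<And>n. w n = t (w (n div q)) ! (n mod q)"
  shows "concat (map (t \<circ> w) [0..<m]) = map w [0..<q*m]"
proof (rule concat_map_upt_blocks)
  fix k
  show "(t \<circ> w) k = map w [q*k..<q*k+q]"
  proof (rule nth_equalityI)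
    fix r
    assume "r < length ((t \<circ> w) k)"
    then have "r < q" using len by simp
    then show "(t \<circ> w) k ! r = map w [q*k..<q*k+q] ! r"
      using rec[of "q*k + r"] by simp
  qed (simp add: len)
qed

lemma morph_fixed_point_uniform_iff:
  assumes q: "0 < q" and len: "\<And>n. length (t (w n)) = q"
  shows "morph_fixed_point t w \<longleftrightarrow> (\<forall>n. w n = t (w (n div q)) ! (n mod q))"
proof
  assume fp: "morph_fixed_point t w"
  show "\<forall>n. w n = t (w (n div q)) ! (n mod q)"
  proof
    fix n
    define k r where "k = n div q" and "r = n mod q"
    have r: "r < q" using q by (simp add: r_def)
    have prefix_len: "length (concat (map (t \<circ> w) [0..<k])) = q * k"
      by (induction k) (simp_all add: len)
    have "q*k + r < length (concat (map (t \<circ> w) [0..<Suc k]))"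
      using prefix_len r by (simp add: len)
    then have "w (q*k + r) = concat (map (t \<circ> w) [0..<Suc k]) ! (q*k + r)"
      using fp unfolding morph_fixed_point_def by metis
    also have "\<dots> = t (w k) ! r"
      using prefix_len r by (simp add: nth_append len)
    finally show "w n = t (w (n div q)) ! (n mod q)"
      by (simp add: k_def r_def)
  qed
next
  assume "\<forall>n. w n = t (w (n div q)) ! (n mod q)"
  then have "concat (map (t \<circ> w) [0..<m]) = map w [0..<q*m]" for m
    using uniform_fixed_point_blocks len by blast
  then show "morph_fixed_point t w"
    unfolding morph_fixed_point_def by simp
qed

lemma q_automaticI:
  fixes t :: "'a \<Rightarrow> 'a list" and w :: "nat \<Rightarrow> 'a"
  assumes "2 \<le> q" and "finite A"
    and closed: "\<forall>c\<in>A. length (t c) = q \<and> set (t c) \<subseteq> A"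
    and range: "\<forall>n. w n \<in> A"
    and fp: "morph_fixed_point t w"
    and coding: "\<forall>n. x n = f (w n)"
  shows "q_automatic q x"
proof -
  obtain e :: "'a \<Rightarrow> nat" where e: "inj_on e A"
    using finite_imp_inj_to_nat_seg[OF \<open>finite A\<close>] by blast
  let ?d = "inv_into A e"
  have d_e: "?d (e c) = c" if "c \<in> A" for c
    using e that by simp
  let ?t = "map e \<circ> t \<circ> ?d" and ?w = "e \<circ> w"
  have q: "0 < q" using \<open>2 \<le> q\<close> by simp
  have len: "length (t (w n)) = q" for n
    using closed range by blast
  have rec: "w n = t (w (n div q)) ! (n mod q)" for n
    using fp morph_fixed_point_uniform_iff[of q t w] q len by blast
  have "?w n = ?t (?w (n div q)) ! (n mod q)" for n
  proof -
    have "n mod q < length (t (w (n div q)))" using len q by simp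
    then show ?thesis using rec[of n] d_e range by simp
  qed
  moreover have "length (?t (?w n)) = q" for n
    using d_e range len by simp
  ultimately have "morph_fixed_point ?t ?w"
    using morph_fixed_point_uniform_iff[of q ?t ?w] q by blast
  moreover have "\<forall>c\<in>e ` A. length (?t c) = q \<and> set (?t c) \<subseteq> e ` A"
    using closed d_e by auto
  moreover have "\<forall>n. x n = (f \<circ> ?d) (?w n)"
    using coding d_e range by simp
  ultimately show ?thesis
    unfolding q_automatic_def using \<open>2 \<le> q\<close> \<open>finite A\<close> range
    by (intro conjI exI[of _ "e ` A"] exI[of _ ?t] exI[of _ ?w] exI[of _ "f \<circ> ?d"]) auto
qed

lemma q_automatic_square:
  assumes "q_automatic (q * q) x"
  shows "q_automatic q x"
proof -
  obtain A and t :: "nat \<Rightarrow> nat list" and w f where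
    "2 \<le> q * q" "finite A"
    and closed: "\<forall>c\<in>A. length (t c) = q * q \<and> set (t c) \<subseteq> A"
    and range: "\<forall>n. w n \<in> A" and fp: "morph_fixed_point t w"
    and coding: "\<forall>n. x n = f (w n)"
    using assms unfolding q_automatic_def by blast
  have q: "2 \<le> q"
  proof (rule ccontr)
    assume "\<not> 2 \<le> q"
    then have "q = 0 \<or> q = 1" by linarith
    then show False using \<open>2 \<le> q * q\<close> by auto
  qed
  have "0 < q * q" using q by simp
  moreover have "length (t (w n)) = q * q" for n
    using closed range by blast
  ultimately have rec: "\<forall>n. w n = t (w (n div (q * q))) ! (n mod (q * q))"
    using fp morph_fixed_point_uniform_iff[of "q * q" t w] by blast
  define t' :: "nat \<times> nat \<times> nat \<Rightarrow> (nat \<times> nat \<times> nat) list"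
    where "t' = (\<lambda>(c, j, d). map (\<lambda>r. (d, r, t c ! (q * j + r))) [0..<q])"
  define w' where "w' n = (w (n div q), n mod q, w n)" for n
  have "w' n = t' (w' (n div q)) ! (n mod q)" for n
  proof -
    have "w n = t (w (n div q div q)) ! (q * (n div q mod q) + n mod q)"
      using rec div_mult2_eq mod_mult2_eq by metis
    then show ?thesis
      using q by (simp add: t'_def w'_def)
  qed
  moreover have "length (t' (w' n)) = q" for n
    by (simp add: t'_def w'_def)
  ultimately have "morph_fixed_point t' w'"
    using morph_fixed_point_uniform_iff[of q t' w'] q by (meson zero_less_numeral less_le_trans)
  moreover have "q * j + r < q * q" if "j < q" "r < q" for j r
  proof -
    have "q * j + r < q * Suc j" using \<open>r < q\<close> by simp
    also have "\<dots> \<le> q * q" using \<open>j < q\<close> by (intro mult_le_mono2) simp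
    finally show ?thesis .
  qed
  then have "\<forall>c\<in>A \<times> {..<q} \<times> A. length (t' c) = q \<and> set (t' c) \<subseteq> A \<times> {..<q} \<times> A"
    using closed by (fastforce simp: t'_def)
  moreover have "\<forall>n. w' n \<in> A \<times> {..<q} \<times> A"
    using range q by (simp add: w'_def)
  moreover have "\<forall>n. x n = (f \<circ> snd \<circ> snd) (w' n)"
    using coding by (simp add: w'_def)
  ultimately show ?thesis
    using q \<open>finite A\<close> by (intro q_automaticI) auto
qed

lemma morph_fixed_point_unique:
  assumes grow: "\<And>c. 2 \<le> length (s c)"
    and u: "morph_fixed_point s u" and v: "morph_fixed_point s v" and "u 0 = v 0"
  shows "u = v"
proof
  have prefix_len: "2 * n \<le> length (concat (map (s \<circ> u) [0..<n]))" for n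
  proof (induction n)
    case (Suc n)
    then show ?case using grow[of "u n"] by simp
  qed simp
  fix i
  show "u i = v i"
  proof (induction i rule: less_induct)
    case (less i)
    show ?case
    proof (cases "i = 0")
      case False
      then have i: "i < length (concat (map (s \<circ> u) [0..<i]))"
        using prefix_len[of i] by linarith
      have same_prefix: "concat (map (s \<circ> u) [0..<i]) = concat (map (s \<circ> v) [0..<i])"
        using less.IH by (intro arg_cong[where f = concat] map_cong) auto
      have "u i = concat (map (s \<circ> u) [0..<i]) ! i"
        using u i unfolding morph_fixed_point_def by simp
      also have "\<dots> = v i"
        using v i unfolding morph_fixed_point_def same_prefix by simp
      finally show ?thesis .
    qed (use \<open>u 0 = v 0\<close> in simp)
  qed
qed

fun tau :: "bool \<Rightarrow> bool list" where
  "tau False = [False, True, False, True]"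
| "tau True = [False, True, True, False]"

lemma length_tau [simp]: "length (tau X) = 4"
  by (cases X) simp_all

function tau_fp :: "nat \<Rightarrow> bool" where
  "tau_fp n = (if n = 0 then False else tau (tau_fp (n div 4)) ! (n mod 4))"
  by auto
termination by (relation "measure id") auto

declare tau_fp.simps [simp del]

lemma tau_fp_rec: "tau_fp n = tau (tau_fp (n div 4)) ! (n mod 4)"
  by (cases "n = 0") (simp_all add: tau_fp.simps[of n] tau_fp.simps[of 0])

definition letter_of :: "bool \<Rightarrow> letter" where
  "letter_of X = (if X then Lb else Lc)"

definition sigma_fp :: "nat \<Rightarrow> letter" where
  "sigma_fp n = (if even n then La else letter_of (tau_fp (n div 2)))"

lemma sigma_La_letter_of:
  "sigma La @ sigma (letter_of X) = concat (map (\<lambda>Z. [La, letter_of Z]) (tau X))"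
  by (cases X) (simp_all add: letter_of_def)

lemma sigma_fp_blocks:
  "concat (map (sigma \<circ> sigma_fp) [0..<2 * m]) = map sigma_fp [0..<8 * m]"
proof -
  let ?pair = "\<lambda>Z. [La, letter_of Z]"
  have pairs: "concat (map (\<lambda>k. [2 * k, 2 * k + 1]) [0..<m]) = [0..<2 * m]"
    using concat_map_upt_blocks[of m "\<lambda>k. [2 * k, 2 * k + 1]" id 2]
    by (simp add: upt_add_2)
  have tau_blocks: "concat (map (tau \<circ> tau_fp) [0..<m]) = map tau_fp [0..<4 * m]"
    by (rule uniform_fixed_point_blocks) (simp_all add: tau_fp_rec[symmetric])
  have "concat (map (sigma \<circ> sigma_fp) [0..<2 * m])
      = concat (map (\<lambda>k. sigma La @ sigma (letter_of (tau_fp k))) [0..<m])"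
    unfolding pairs[symmetric] concat_map_concat by (simp add: sigma_fp_def o_def)
  also have "\<dots> = concat (map ?pair (concat (map (tau \<circ> tau_fp) [0..<m])))"
    unfolding concat_map_concat map_map o_def sigma_La_letter_of ..
  also have "\<dots> = map sigma_fp [0..<2 * (4 * m)]"
    unfolding tau_blocks map_map
  proof (rule concat_map_upt_blocks)
    fix k
    show "(?pair \<circ> tau_fp) k = map sigma_fp [2 * k..<2 * k + 2]"
      by (simp add: upt_add_2 sigma_fp_def)
  qed
  finally show ?thesis by simp
qed

lemma sigma_fp_fixed_point: "morph_fixed_point sigma sigma_fp"
  unfolding morph_fixed_point_def
proof (intro allI impI)
  fix n i
  let ?prefix = "concat (map (sigma \<circ> sigma_fp) [0..<n])"
  assume i: "i < length ?prefix"
  have "[0..<2 * n] = [0..<n] @ [n..<2 * n]"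
    using upt_add_eq_append[of 0 n n] by (simp add: mult_2)
  then have split: "map sigma_fp [0..<8 * n] = ?prefix @ concat (map (sigma \<circ> sigma_fp) [n..<2 * n])"
    using sigma_fp_blocks[of n] by simp
  then have "i < 8 * n"
    using i length_append[of ?prefix] by (metis diff_zero length_map length_upt trans_less_add1)
  moreover have "?prefix ! i = map sigma_fp [0..<8 * n] ! i"
    using i split by (simp add: nth_append)
  ultimately show "?prefix ! i = sigma_fp i" by simp
qed

lemma length_sigma_ge_2: "2 \<le> length (sigma c)"
  by (cases c) simp_all

fun pair_morphism :: "bool \<times> nat \<Rightarrow> (bool \<times> nat) list" where
  "pair_morphism (X, j) = map (\<lambda>r. (tau X ! (2 * j + r div 2), r mod 2)) [0..<4]"

definition pair_word :: "nat \<Rightarrow> bool \<times> nat" where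
  "pair_word n = (tau_fp (n div 2), n mod 2)"

lemma pair_word_rec: "pair_word n = pair_morphism (pair_word (n div 4)) ! (n mod 4)"
proof -
  have "n div 2 div 4 = n div 4 div 2"
    by (simp add: div_mult2_eq[symmetric] mult.commute)
  moreover have "n div 2 mod 4 = 2 * (n div 4 mod 2) + n mod 4 div 2"
    using mod_mult2_eq[of "n div 2" 2 2] mod_mult2_eq[of n 2 2] div_mult2_eq[of n 2 2] by simp
  moreover have "n mod 4 mod 2 = n mod 2"
    by (simp add: mod_mod_cancel)
  ultimately show ?thesis
    by (simp add: pair_word_def tau_fp_rec[of "n div 2"])
qed

lemma sigma_fp_4_automatic: "q_automatic 4 sigma_fp"
proof (rule q_automaticI)
  have "length (pair_morphism (pair_word n)) = 4" for n
    by (simp add: pair_word_def)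
  then show "morph_fixed_point pair_morphism pair_word"
    using morph_fixed_point_uniform_iff[of 4 pair_morphism pair_word] pair_word_rec
    by (meson zero_less_numeral)
  show "\<forall>c\<in>UNIV \<times> {..<2}. length (pair_morphism c) = 4 \<and> set (pair_morphism c) \<subseteq> UNIV \<times> {..<2}"
    by auto
  show "\<forall>n. pair_word n \<in> UNIV \<times> {..<2}"
    by (simp add: pair_word_def)
  show "\<forall>n. sigma_fp n = (\<lambda>(X, j). if j = 0 then La else letter_of X) (pair_word n)"
    by (simp add: sigma_fp_def pair_word_def even_iff_mod_2_eq_zero)
qed simp_all

theorem mainTheorem8:
  fixes u :: "nat \<Rightarrow> letter"
  assumes "morph_fixed_point sigma u" and "u 0 = La"
  shows "q_automatic 4 u \<and> q_automatic 2 u"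
proof -
  have "u = sigma_fp"
    using morph_fixed_point_unique[OF length_sigma_ge_2 assms(1) sigma_fp_fixed_point] assms(2)
    by (simp add: sigma_fp_def)
  moreover have "q_automatic (2 * 2) sigma_fp"
    using sigma_fp_4_automatic by simp
  ultimately show ?thesis
    using sigma_fp_4_automatic q_automatic_square by blast
qed

end
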